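(* In the setting of the context, assume (A1) and (A2) hold. Let $\{z^k\}$ be generated by SAPS, let $N>0$ be an integer, let $\widetilde z^N=(\widetilde x^N,\widetilde y^N)$ be the averaged iterate, and set $\Delta_k=G(z^k,\xi_k)-g(z^k)$. Then for any $z=(x,y)\in\mathbb{Z}$, $$\phi(\widetilde x^N,y)-\phi(x,\widetilde y^N)\le\Big(2\sum_{k=1}^N\gamma_k\Big)^{-1}\Big[\|z-z^1\|^2-\|z^{N+1}-z\|^2+\sum_{k=1}^N\big(\gamma_k^2\|v(z^k)+G(z^k,\xi_k)\|^2+2\gamma_k\langle\Delta_k,z-z^k\rangle\big)\Big]$$ holds for any $v(z^k)=(v_x(x^k),v_y(y^k))$ with $v_x(x^k)\in\partial\vartheta(x^k)$ and $v_y(y^k)\in\partial\omega(y^k)$.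
   Context: Setting: $\vartheta:\mathbb{R}^n\to\mathbb{R}\cup\{+\infty\}$, $\omega:\mathbb{R}^m\to\mathbb{R}\cup\{+\infty\}$ proper lower semicontinuous convex; $\xi$ random vector supported on $\Xi\subseteq\mathbb{R}^q$; $F:\mathbb{R}^n\times\mathbb{R}^m\times\Xi\to\mathbb{R}$, $f(x,y)=\mathbb{E}[F(x,y,\xi)]$ finite, continuous, convex in $x$, concave in $y$ on $\mathbb{Z}:=\mathrm{dom}\,\vartheta\times\mathrm{dom}\,\omega$; $\phi(x,y)=\vartheta(x)+f(x,y)-\omega(y)$; $z=(x,y)$; $\mathrm{Prox}_{\gamma h}(u)=\mathrm{argmin}_w\{h(w)+\frac{1}{2\gamma}\|w-u\|^2\}$. (A1) Samples $\xi_1,\xi_2,\dots$ are i.i.d. copies of $\xi$. (A2) An oracle returns, for $(x,y,\xi)\in\mathbb{Z}\times\Xi$, $G_x(x,y,\xi)\in\mathbb{R}^n$, $G_y(x,y,\xi)\in\mathbb{R}^m$ with $g_x(x,y):=\mathbb{E}[G_x(x,y,\xi)]\in\partial_xf(x,y)$ and $g_y(x,y):=\mathbb{E}[G_y(x,y,\xi)]$, $-g_y(x,y)\in\partial_y[-f](x,y)$. Write $G(z,\xi)=(G_x(z,\xi),-G_y(z,\xi))$, $g(z)=(g_x(z),-g_y(z))$. SAPS algorithm: given $z^1=(x^1,y^1)\in\mathbb{R}^n\times\mathbb{R}^m$ and step sizes $\gamma_k>0$, for $k=1,2,\dots$: $x^{k+1}=\mathrm{Prox}_{\gamma_k\vartheta}(x^k-\gamma_kG_x(x^k,y^k,\xi_k))$,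 $y^{k+1}=\mathrm{Prox}_{\gamma_k\omega}(y^k+\gamma_kG_y(x^k,y^k,\xi_k))$. Averaged iterate $\widetilde z^N=\sum_{j=1}^N\lambda_j^Nz^j$, $\lambda_j^N=\gamma_j/\sum_{i=1}^N\gamma_i$. *)

theory Defs
  imports "HOL-Analysis.Analysis" "HOL-Probability.Probability"
begin

text \<open>Extended-real-valued functions h : E \<Rightarrow> R \<union> {+\<infinity>} are modelled as maps into ereal.\<close>

definition edom :: "('a \<Rightarrow> ereal) \<Rightarrow> 'a set" where
  "edom h = {x. h x \<noteq> \<infinity>}"

definition proper_fun :: "('a \<Rightarrow> ereal) \<Rightarrow> bool" where
  "proper_fun h \<longleftrightarrow> (\<forall>x. h x \<noteq> -\<infinity>) \<and> edom h \<noteq> {}"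

definition convex_fun :: "('a::real_vector \<Rightarrow> ereal) \<Rightarrow> bool" where
  "convex_fun h \<longleftrightarrow> (\<forall>x y u v. u \<ge> 0 \<longrightarrow> v \<ge> 0 \<longrightarrow> u + v = 1 \<longrightarrow>
      h (u *\<^sub>R x + v *\<^sub>R y) \<le> ereal u * h x + ereal v * h y)"

definition lsc_fun :: "('a::metric_space \<Rightarrow> ereal) \<Rightarrow> bool" where
  "lsc_fun h \<longleftrightarrow> (\<forall>x X. X \<longlonglongrightarrow> x \<longrightarrow> h x \<le> liminf (\<lambda>n. h (X n)))"

definition subdiff :: "('a::real_inner \<Rightarrow> ereal) \<Rightarrow> 'a \<Rightarrow> 'a set" where
  "subdiff h x = {v. \<bar>h x\<bar> \<noteq> \<infinity> \<and> (\<forall>w. h w \<ge> h x + ereal (inner v (w - x)))}"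

text \<open>Proximal map: the (unique, for proper lsc convex h) minimiser of
  h(w) + 1/(2 gamma) * norm (w - u)^2.\<close>
definition prox :: "('a::real_normed_vector \<Rightarrow> ereal) \<Rightarrow> real \<Rightarrow> 'a \<Rightarrow> 'a" where
  "prox h \<gamma> u = (THE w. \<forall>w'. h w + ereal (norm (w - u)^2 / (2 * \<gamma>))
                              \<le> h w' + ereal (norm (w' - u)^2 / (2 * \<gamma>)))"

end

theory Submission
  imports Defs
begin

(* The estimate is deterministic and holds along every sample path. If p is the prox point of u,
   then <u - p, w - p> <= gamma (h w - h p); together with the subgradient inequality at the
   current iterate and Young's inequality this gives, for theta and omega separately,
     |p - w|^2 <= |x - w|^2 + 2 gamma (h w - h x) + 2 gamma <G, w - x> + gamma^2 |v + G|^2.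
   The partial subgradients of f turn the oracle term into the noise <Delta_k, z - z^k> plus the
   gap phi(x^k, y) - phi(x, y^k), so 2 gamma_k times the gap is bounded by a telescoping
   difference of squared distances plus the error terms. Summing over k and applying Jensen's
   inequality to the gap, which is convex in (x^k, y^k), yields the bound at the averaged iterate.
   That the prox map is well defined needs an argument of its own: a subgradient gives an affine
   minorant, so the prox objective has bounded sublevel sets and, being lower semicontinuous,
   attains its minimum; the variational inequality makes the minimiser unique. *)

lemma subdiff_imp_edom: "v \<in> subdiff h x \<Longrightarrow> x \<in> edom h"
  by (auto simp: subdiff_def edom_def)

lemma proper_fun_real_of_ereal:
  assumes "proper_fun h" "x \<in> edom h"
  shows "h x = ereal (real_of_ereal (h x))"
  using assms by (cases "h x") (auto simp: proper_fun_def edom_def)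

lemma subdiff_le:
  assumes "v \<in> subdiff h x" "w \<in> edom h"
  shows "real_of_ereal (h x) + inner v (w - x) \<le> real_of_ereal (h w)"
proof -
  have "h x + ereal (inner v (w - x)) \<le> h w" "\<bar>h x\<bar> \<noteq> \<infinity>"
    using assms(1) by (auto simp: subdiff_def)
  with assms(2) show ?thesis
    by (cases "h x"; cases "h w") (auto simp: edom_def)
qed

lemma subdiff_restrict_le:
  assumes "v \<in> subdiff (\<lambda>a. if a \<in> C then ereal (\<phi> a) else \<infinity>) a0" "a \<in> C"
  shows "\<phi> a0 + inner v (a - a0) \<le> \<phi> a"
  using subdiff_le[OF assms(1), of a] assms(2) subdiff_imp_edom[OF assms(1)]
  by (simp add: edom_def split: if_splits)

lemma convex_edom:
  assumes "convex_fun h"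
  shows "convex (edom h)"
  unfolding convex_def
proof (intro ballI allI impI)
  fix a b and u v :: real assume "a \<in> edom h" "b \<in> edom h" "0 \<le> u" "0 \<le> v" "u + v = 1"
  moreover from this have "h (u *\<^sub>R a + v *\<^sub>R b) \<le> ereal u * h a + ereal v * h b"
    using assms by (simp add: convex_fun_def)
  ultimately show "u *\<^sub>R a + v *\<^sub>R b \<in> edom h"
    by (cases "h a"; cases "h b") (auto simp: edom_def split: if_splits)
qed

lemma convex_on_real_of_ereal:
  assumes "proper_fun h" "convex_fun h"
  shows "convex_on (edom h) (\<lambda>x. real_of_ereal (h x))"
  unfolding convex_on_def
proof (intro conjI convex_edom[OF assms(2)] ballI allI impI)
  fix a b and u v :: real assume ab: "a \<in> edom h" "b \<in> edom h" and uv: "0 \<le> u" "0 \<le> v" "u + v = 1"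
  then have "u *\<^sub>R a + v *\<^sub>R b \<in> edom h"
    using convex_edom[OF assms(2)] by (simp add: convex_def)
  moreover have "h (u *\<^sub>R a + v *\<^sub>R b) \<le> ereal u * h a + ereal v * h b"
    using assms(2) uv by (simp add: convex_fun_def)
  ultimately show "real_of_ereal (h (u *\<^sub>R a + v *\<^sub>R b)) \<le> u * real_of_ereal (h a) + v * real_of_ereal (h b)"
    using ab proper_fun_real_of_ereal[OF assms(1)]
    by (metis ereal_less_eq(3) plus_ereal.simps(1) times_ereal.simps(1))
qed

definition is_prox_point :: "('a::real_normed_vector \<Rightarrow> ereal) \<Rightarrow> real \<Rightarrow> 'a \<Rightarrow> 'a \<Rightarrow> bool" where
  "is_prox_point h \<gamma> u p \<longleftrightarrow>
     (\<forall>w. h p + ereal (norm (p - u)^2 / (2 * \<gamma>)) \<le> h w + ereal (norm (w - u)^2 / (2 * \<gamma>)))"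

lemma prox_eq_The_is_prox_point: "prox h \<gamma> u = (THE p. is_prox_point h \<gamma> u p)"
  by (simp add: prox_def is_prox_point_def)

lemma le_0_if_le_mult_small:
  fixes A B :: real
  assumes "\<And>t. 0 < t \<Longrightarrow> t < 1 \<Longrightarrow> A \<le> t * B"
  shows "A \<le> 0"
proof (rule tendsto_lowerbound)
  show "((\<lambda>t. t * B) \<longlongrightarrow> 0) (at_right 0)"
    using tendsto_mult_right[OF tendsto_ident_at, of B "0::real" "{0<..}"] by simp
  show "\<forall>\<^sub>F t in at_right 0. A \<le> t * B"
    using eventually_at_right_real[of 0 1] by (rule eventually_mono) (use assms in auto)
qed simp

lemma is_prox_point_variational:
  assumes "convex_fun h" "\<gamma> > 0" "is_prox_point h \<gamma> u p" "h p = ereal a" "h w = ereal b"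
  shows "inner (u - p) (w - p) \<le> \<gamma> * (b - a)"
proof -
  \<comment> \<open>compare p with the point at position t on the segment from p to w, then let t tend to 0\<close>
  have "2 * \<gamma> * (a - b) + 2 * inner (u - p) (w - p) \<le> t * norm (w - p)^2"
    if t: "0 < t" "t < 1" for t
  proof -
    define wt where "wt = (1 - t) *\<^sub>R p + t *\<^sub>R w"
    have "h wt \<le> ereal (1 - t) * h p + ereal t * h w"
      using assms(1) t unfolding convex_fun_def wt_def by auto
    then have hwt: "h wt \<le> ereal ((1 - t) * a + t * b)"
      by (simp add: assms(4,5))
    have "ereal a + ereal (norm (p - u)^2 / (2 * \<gamma>)) \<le> h wt + ereal (norm (wt - u)^2 / (2 * \<gamma>))"
      using assms(3,4) by (metis is_prox_point_def)
    also have "\<dots> \<le> ereal ((1 - t) * a + t * b) + ereal (norm (wt - u)^2 / (2 * \<gamma>))"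
      using hwt by (rule add_right_mono)
    finally have le: "a + norm (p - u)^2 / (2 * \<gamma>) \<le> (1 - t) * a + t * b + norm (wt - u)^2 / (2 * \<gamma>)"
      by simp
    have "2 * \<gamma> * a + norm (p - u)^2 = 2 * \<gamma> * (a + norm (p - u)^2 / (2 * \<gamma>))"
      using assms(2) by (simp add: field_simps)
    also have "\<dots> \<le> 2 * \<gamma> * ((1 - t) * a + t * b + norm (wt - u)^2 / (2 * \<gamma>))"
      using le assms(2) by (intro mult_left_mono) auto
    also have "\<dots> = 2 * \<gamma> * ((1 - t) * a + t * b) + norm (wt - u)^2"
      using assms(2) by (simp add: field_simps)
    finally have "2 * \<gamma> * a + norm (p - u)^2 \<le> 2 * \<gamma> * ((1 - t) * a + t * b) + norm (wt - u)^2" .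
    moreover have "norm (wt - u)^2 = norm (p - u)^2 - 2 * t * inner (u - p) (w - p) + t^2 * norm (w - p)^2"
    proof -
      have "wt - u = (p - u) + t *\<^sub>R (w - p)"
        by (simp add: wt_def algebra_simps)
      then show ?thesis
        unfolding power2_norm_eq_inner by (simp only:)
          (simp add: inner_commute algebra_simps power2_eq_square)
    qed
    ultimately have "t * (2 * \<gamma> * (a - b) + 2 * inner (u - p) (w - p)) \<le> t * (t * norm (w - p)^2)"
      by (simp add: algebra_simps power2_eq_square)
    with t show ?thesis
      by simp
  qed
  then have "2 * \<gamma> * (a - b) + 2 * inner (u - p) (w - p) \<le> 0"
    by (intro le_0_if_le_mult_small) auto
  then show ?thesis
    by (simp add: algebra_simps)
qed

lemma lsc_fun_add_continuous:
  fixes h :: "'a::metric_space \<Rightarrow> ereal"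
  assumes lsc: "lsc_fun h" and cont: "\<And>x. isCont q x"
  shows "lsc_fun (\<lambda>x. h x + ereal (q x))"
  unfolding lsc_fun_def
proof (intro allI impI)
  fix x and X :: "nat \<Rightarrow> 'a" assume X: "X \<longlonglongrightarrow> x"
  then have q_lim: "(\<lambda>n. ereal (q (X n))) \<longlonglongrightarrow> ereal (q x)"
    using cont isCont_tendsto_compose tendsto_ereal by blast
  have "h x + ereal (q x) \<le> liminf (\<lambda>n. h (X n)) + ereal (q x)"
    using lsc X unfolding lsc_fun_def by (blast intro: add_right_mono)
  also have "\<dots> = liminf (\<lambda>n. h (X n) + ereal (q (X n)))"
    using ereal_liminf_lim_add[OF q_lim, of "\<lambda>n. h (X n)"] by (simp add: add.commute)
  finally show "h x + ereal (q x) \<le> liminf (\<lambda>n. h (X n) + ereal (q (X n)))" .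
qed

lemma lsc_fun_attains_min:
  fixes g :: "'a::heine_borel \<Rightarrow> ereal"
  assumes lsc: "lsc_fun g" and bdd: "bounded {w. g w \<le> g w0}"
  shows "\<exists>p. \<forall>w. g p \<le> g w"
proof -
  define S where "S = {w. g w \<le> g w0}"
  obtain F where F: "decseq F" "range F \<subseteq> g ` S" "Inf (g ` S) = (INF n. F n)"
    using Inf_countable_INF[of "g ` S"] by (auto simp: S_def)
  have "\<forall>n. \<exists>w. w \<in> S \<and> F n = g w"
    using F(2) by blast
  then obtain W where W: "\<And>n. W n \<in> S" "\<And>n. F n = g (W n)"
    by metis
  from bdd have "bounded (range W)"
    by (rule bounded_subset) (use W(1) S_def in auto)
  then obtain l r where r: "strict_mono r" and lim: "(W \<circ> r) \<longlonglongrightarrow> l"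
    using bounded_imp_convergent_subsequence by blast
  have "(\<lambda>n. F (r n)) \<longlonglongrightarrow> Inf (g ` S)"
    using LIMSEQ_subseq_LIMSEQ[OF LIMSEQ_INF[OF F(1)] r] F(3) by (simp add: o_def)
  then have "liminf (\<lambda>n. g ((W \<circ> r) n)) = Inf (g ` S)"
    by (intro lim_imp_Liminf) (simp_all add: W(2))
  moreover have "g l \<le> liminf (\<lambda>n. g ((W \<circ> r) n))"
    using lsc lim unfolding lsc_fun_def by (elim allE impE)
  ultimately have gl: "g l \<le> Inf (g ` S)"
    by simp
  have "g l \<le> g w" for w
  proof (cases "w \<in> S")
    case True
    then show ?thesis using gl by (meson INF_lower order_trans)
  next
    case False
    have "w0 \<in> S" by (simp add: S_def)
    then have "g l \<le> g w0" using gl by (meson INF_lower order_trans)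
    with False show ?thesis by (simp add: S_def)
  qed
  then show ?thesis by blast
qed

lemma bounded_sublevel_add_norm_sq:
  assumes "v0 \<in> subdiff h x0" "\<gamma> > 0"
  shows "bounded {w. h w + ereal (norm (w - u)^2 / (2 * \<gamma>)) \<le> ereal c}"
proof -
  define a where "a = norm v0"
  define C where "C = c - real_of_ereal (h x0) + a * norm (u - x0)"
  define R where "R = \<gamma> * a + sqrt (2 * \<gamma> * C + (\<gamma> * a)^2)"
  have "norm (w - u) \<le> R" if w: "h w + ereal (norm (w - u)^2 / (2 * \<gamma>)) \<le> ereal c" for w
  proof -
    have "w \<in> edom h"
      using w by (auto simp: edom_def)
    then have "real_of_ereal (h x0) + inner v0 (w - x0) \<le> real_of_ereal (h w)"
      using assms(1) by (intro subdiff_le)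
    moreover have "h w \<noteq> -\<infinity>"
      using assms(1) unfolding subdiff_def by (cases "h x0") (auto dest: spec[of _ w])
    then have "real_of_ereal (h w) + norm (w - u)^2 / (2 * \<gamma>) \<le> c"
      using w by (cases "h w") auto
    moreover have "- inner v0 (w - x0) \<le> a * (norm (w - u) + norm (u - x0))"
    proof -
      have "- inner v0 (w - x0) \<le> a * norm (w - x0)"
        unfolding a_def using Cauchy_Schwarz_ineq2[of v0 "w - x0"] by linarith
      also have "\<dots> \<le> a * (norm (w - u) + norm (u - x0))"
        using norm_triangle_ineq[of "w - u" "u - x0"] by (simp add: a_def mult_left_mono)
      finally show ?thesis .
    qed
    ultimately have "norm (w - u)^2 / (2 * \<gamma>) \<le> C + a * norm (w - u)"
      by (simp add: C_def algebra_simps)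
    then have "(norm (w - u) - \<gamma> * a)^2 \<le> 2 * \<gamma> * C + (\<gamma> * a)^2"
      using assms(2) by (simp add: field_simps power2_eq_square)
    then show ?thesis
      unfolding R_def using real_le_rsqrt by fastforce
  qed
  then show ?thesis
    by (intro bounded_subset[OF bounded_cball[of u R]]) (auto simp: dist_norm norm_minus_commute)
qed

lemma is_prox_point_exists:
  fixes h :: "'a::euclidean_space \<Rightarrow> ereal"
  assumes "lsc_fun h" "v0 \<in> subdiff h x0" "\<gamma> > 0"
  shows "\<exists>p. is_prox_point h \<gamma> u p"
proof -
  define g where "g w = h w + ereal (norm (w - u)^2 / (2 * \<gamma>))" for w
  have "lsc_fun g"
    unfolding g_def using assms(3) by (intro lsc_fun_add_continuous assms(1) continuous_intros) auto
  moreover have "bounded {w. g w \<le> g x0}"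
  proof -
    have "g x0 = ereal (real_of_ereal (h x0) + norm (x0 - u)^2 / (2 * \<gamma>))"
      using assms(2) by (cases "h x0") (auto simp: g_def subdiff_def)
    then show ?thesis
      unfolding g_def using bounded_sublevel_add_norm_sq[OF assms(2,3)] by simp
  qed
  ultimately obtain p where "\<forall>w. g p \<le> g w"
    using lsc_fun_attains_min by blast
  then show ?thesis
    unfolding is_prox_point_def g_def by blast
qed

lemma is_prox_point_edom:
  assumes "proper_fun h" "is_prox_point h \<gamma> u p"
  shows "p \<in> edom h"
proof -
  obtain x0 where "h x0 \<noteq> \<infinity>"
    using assms(1) by (auto simp: proper_fun_def edom_def)
  moreover have "h p + ereal (norm (p - u)^2 / (2 * \<gamma>)) \<le> h x0 + ereal (norm (x0 - u)^2 / (2 * \<gamma>))"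
    using assms(2) by (simp add: is_prox_point_def)
  ultimately show ?thesis
    by (auto simp: edom_def)
qed

lemma is_prox_point_unique:
  fixes h :: "'a::real_inner \<Rightarrow> ereal"
  assumes "proper_fun h" "convex_fun h" "\<gamma> > 0"
    and p: "is_prox_point h \<gamma> u p" and p': "is_prox_point h \<gamma> u p'"
  shows "p' = p"
proof -
  define a b where "a = real_of_ereal (h p)" and "b = real_of_ereal (h p')"
  have ha: "h p = ereal a" and hb: "h p' = ereal b"
    unfolding a_def b_def using proper_fun_real_of_ereal is_prox_point_edom assms by metis+
  have "inner (u - p) (p' - p) \<le> \<gamma> * (b - a)" "inner (u - p') (p - p') \<le> \<gamma> * (a - b)"
    using is_prox_point_variational[OF assms(2,3)] p p' ha hb by blast+
  moreover have "inner (u - p) (p' - p) + inner (u - p') (p - p') = inner (p' - p) (p' - p)"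
    by (simp add: inner_commute algebra_simps)
  ultimately have "inner (p' - p) (p' - p) \<le> 0"
    by (simp add: algebra_simps)
  then show ?thesis
    by (metis eq_iff_diff_eq_0 inner_gt_zero_iff not_le)
qed

lemma prox_is_prox_point:
  fixes h :: "'a::euclidean_space \<Rightarrow> ereal"
  assumes "proper_fun h" "lsc_fun h" "convex_fun h" "\<gamma> > 0" "v0 \<in> subdiff h x0"
  shows "is_prox_point h \<gamma> u (prox h \<gamma> u)"
proof -
  have "\<exists>!p. is_prox_point h \<gamma> u p"
    using is_prox_point_exists[OF assms(2,5,4)] is_prox_point_unique[OF assms(1,3,4)] by blast
  then show ?thesis
    unfolding prox_eq_The_is_prox_point by (rule theI')
qed

lemma prox_descent:
  fixes h :: "'a::euclidean_space \<Rightarrow> ereal"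
  assumes "proper_fun h" "lsc_fun h" "convex_fun h" "\<gamma> > 0" "v \<in> subdiff h x" "w \<in> edom h"
  shows "norm (prox h \<gamma> (x - \<gamma> *\<^sub>R G) - w)^2
    \<le> norm (x - w)^2 + 2 * \<gamma> * (real_of_ereal (h w) - real_of_ereal (h x))
       + 2 * \<gamma> * inner G (w - x) + \<gamma>^2 * norm (v + G)^2"
proof -
  define p where "p = prox h \<gamma> (x - \<gamma> *\<^sub>R G)"
  have p: "is_prox_point h \<gamma> (x - \<gamma> *\<^sub>R G) p"
    unfolding p_def using prox_is_prox_point[OF assms(1-5)] .
  have "inner ((x - \<gamma> *\<^sub>R G) - p) (w - p) \<le> \<gamma> * (real_of_ereal (h w) - real_of_ereal (h p))"
    using is_prox_point_variational[OF assms(3,4) p] proper_fun_real_of_ereal[OF assms(1)]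
      is_prox_point_edom[OF assms(1) p] assms(6) by metis
  then have var: "inner (x - p) (w - p)
      \<le> \<gamma> * (real_of_ereal (h w) - real_of_ereal (h p)) + \<gamma> * inner G (w - p)"
    by (simp add: algebra_simps)
  have "real_of_ereal (h x) + inner v (p - x) \<le> real_of_ereal (h p)"
    using assms(5) is_prox_point_edom[OF assms(1) p] by (rule subdiff_le)
  then have "\<gamma> * (real_of_ereal (h x) + inner v (p - x)) \<le> \<gamma> * real_of_ereal (h p)"
    using assms(4) by (intro mult_left_mono) auto
  with var have key: "inner (x - p) (w - p) \<le> \<gamma> * (real_of_ereal (h w) - real_of_ereal (h x))
      + \<gamma> * inner G (w - x) + \<gamma> * inner (v + G) (x - p)"
    by (simp add: algebra_simps)
  have young: "2 * \<gamma> * inner (v + G) (x - p) \<le> norm (x - p)^2 + \<gamma>^2 * norm (v + G)^2"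
  proof -
    have "0 \<le> norm ((x - p) - \<gamma> *\<^sub>R (v + G))^2"
      by simp
    then show ?thesis
      unfolding power2_norm_eq_inner
      by (simp add: inner_commute algebra_simps power2_eq_square)
  qed
  have "norm (p - w)^2 = norm (x - w)^2 - norm (x - p)^2 + 2 * inner (x - p) (w - p)"
    unfolding power2_norm_eq_inner by (simp add: inner_commute algebra_simps)
  also have "\<dots> \<le> norm (x - w)^2 + 2 * \<gamma> * (real_of_ereal (h w) - real_of_ereal (h x))
       + 2 * \<gamma> * inner G (w - x) + \<gamma>^2 * norm (v + G)^2"
    using key young by linarith
  finally show ?thesis
    unfolding p_def .
qed

lemma norm_Pair_power2: "norm (a, b)^2 = norm a^2 + norm b^2"
  by (simp add: norm_Pair)

lemma saps_step_gap:
  fixes \<theta> :: "'a::euclidean_space \<Rightarrow> ereal" and \<omega> :: "'b::euclidean_space \<Rightarrow> ereal"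
  assumes \<theta>: "proper_fun \<theta>" "lsc_fun \<theta>" "convex_fun \<theta>"
    and \<omega>: "proper_fun \<omega>" "lsc_fun \<omega>" "convex_fun \<omega>"
    and \<gamma>: "\<gamma> > 0"
    and v: "vx \<in> subdiff \<theta> xk" "vy \<in> subdiff \<omega> yk"
    and gx: "gx \<in> subdiff (\<lambda>a. if a \<in> edom \<theta> then ereal (f a yk) else \<infinity>) xk"
    and gy: "- gy \<in> subdiff (\<lambda>b. if b \<in> edom \<omega> then ereal (- f xk b) else \<infinity>) yk"
    and z: "x \<in> edom \<theta>" "y \<in> edom \<omega>"
  shows "2 * \<gamma> * ((real_of_ereal (\<theta> xk) + f xk y - real_of_ereal (\<omega> y))
                   - (real_of_ereal (\<theta> x) + f x yk - real_of_ereal (\<omega> yk)))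
    \<le> norm ((xk, yk) - (x, y))^2
       - norm ((prox \<theta> \<gamma> (xk - \<gamma> *\<^sub>R Gx), prox \<omega> \<gamma> (yk + \<gamma> *\<^sub>R Gy)) - (x, y))^2
       + \<gamma>^2 * norm ((vx, vy) + (Gx, - Gy))^2
       + 2 * \<gamma> * inner ((Gx, - Gy) - (gx, - gy)) ((x, y) - (xk, yk))"
proof -
  have "norm (prox \<theta> \<gamma> (xk - \<gamma> *\<^sub>R Gx) - x)^2
    \<le> norm (xk - x)^2 + 2 * \<gamma> * (real_of_ereal (\<theta> x) - real_of_ereal (\<theta> xk))
       + 2 * \<gamma> * inner Gx (x - xk) + \<gamma>^2 * norm (vx + Gx)^2"
    using prox_descent[OF \<theta> \<gamma> v(1) z(1)] .
  moreover have "norm (prox \<omega> \<gamma> (yk - \<gamma> *\<^sub>R (- Gy)) - y)^2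
    \<le> norm (yk - y)^2 + 2 * \<gamma> * (real_of_ereal (\<omega> y) - real_of_ereal (\<omega> yk))
       + 2 * \<gamma> * inner (- Gy) (y - yk) + \<gamma>^2 * norm (vy + - Gy)^2"
    using prox_descent[OF \<omega> \<gamma> v(2) z(2)] .
  moreover have "f xk yk + inner gx (x - xk) \<le> f x yk"
    using subdiff_restrict_le[OF gx z(1)] .
  then have "\<gamma> * (f xk yk + inner gx (x - xk)) \<le> \<gamma> * f x yk"
    using \<gamma> by (intro mult_left_mono) auto
  moreover have "- f xk yk + inner (- gy) (y - yk) \<le> - f xk y"
    using subdiff_restrict_le[OF gy z(2)] .
  then have "\<gamma> * (- f xk yk + inner (- gy) (y - yk)) \<le> \<gamma> * (- f xk y)"
    using \<gamma> by (intro mult_left_mono) auto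
  ultimately show ?thesis
    by (simp add: norm_Pair_power2 norm_minus_commute algebra_simps)
qed

lemma sum_normalized_weights:
  fixes \<gamma> :: "'i \<Rightarrow> real"
  assumes "finite I" "I \<noteq> {}" "\<And>i. i \<in> I \<Longrightarrow> \<gamma> i > 0"
  shows "(\<Sum>i\<in>I. \<gamma> i / sum \<gamma> I) = 1"
proof -
  have "sum \<gamma> I > 0"
    using assms by (intro sum_pos) auto
  then show ?thesis
    by (simp flip: sum_divide_distrib)
qed

lemma weighted_mean_in_convex:
  assumes "convex C" "finite I" "I \<noteq> {}" "\<And>i. i \<in> I \<Longrightarrow> \<gamma> i > 0" "\<And>i. i \<in> I \<Longrightarrow> z i \<in> C"
  shows "(\<Sum>i\<in>I. (\<gamma> i / sum \<gamma> I) *\<^sub>R z i) \<in> C"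
proof -
  have "sum \<gamma> I > 0"
    using assms by (intro sum_pos) auto
  with assms sum_normalized_weights[OF assms(2-4)] show ?thesis
    by (intro convex_sum) (auto intro: less_imp_le)
qed

lemma convex_on_weighted_mean_le:
  assumes "convex_on C \<phi>" "finite I" "I \<noteq> {}" "\<And>i. i \<in> I \<Longrightarrow> \<gamma> i > 0" "\<And>i. i \<in> I \<Longrightarrow> z i \<in> C"
  shows "\<phi> (\<Sum>i\<in>I. (\<gamma> i / sum \<gamma> I) *\<^sub>R z i) \<le> (\<Sum>i\<in>I. \<gamma> i * \<phi> (z i)) / sum \<gamma> I"
proof -
  have "sum \<gamma> I > 0"
    using assms by (intro sum_pos) auto
  with assms sum_normalized_weights[OF assms(2-4)]
  have "\<phi> (\<Sum>i\<in>I. (\<gamma> i / sum \<gamma> I) *\<^sub>R z i) \<le> (\<Sum>i\<in>I. \<gamma> i / sum \<gamma> I * \<phi> (z i))"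
    by (intro convex_on_sum) (auto intro: less_imp_le)
  then show ?thesis
    by (simp add: sum_divide_distrib)
qed

lemma convex_on_pair_weighted_mean_le:
  assumes "convex_on A \<phi>" "convex_on B \<psi>" "finite I" "I \<noteq> {}" "\<And>i. i \<in> I \<Longrightarrow> \<gamma> i > 0"
    and "\<And>i. i \<in> I \<Longrightarrow> a i \<in> A" "\<And>i. i \<in> I \<Longrightarrow> b i \<in> B"
  shows "\<phi> (\<Sum>i\<in>I. (\<gamma> i / sum \<gamma> I) *\<^sub>R a i) + \<psi> (\<Sum>i\<in>I. (\<gamma> i / sum \<gamma> I) *\<^sub>R b i)
    \<le> (\<Sum>i\<in>I. \<gamma> i * (\<phi> (a i) + \<psi> (b i))) / sum \<gamma> I"
  using add_mono[OF convex_on_weighted_mean_le[OF assms(1,3-6)] convex_on_weighted_mean_le[OF assms(2,3-5,7)]]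
  by (simp add: distrib_left sum.distrib add_divide_distrib)

lemma sum_le_telescope:
  fixes a d r :: "nat \<Rightarrow> real"
  assumes "\<And>k. k \<in> {1..N} \<Longrightarrow> a k \<le> d k - d (Suc k) + r k"
  shows "(\<Sum>k=1..N. a k) \<le> d 1 - d (Suc N) + (\<Sum>k=1..N. r k)"
proof -
  have "(\<Sum>k=1..N. a k) \<le> (\<Sum>k=1..N. d k - d (Suc k)) + (\<Sum>k=1..N. r k)"
    unfolding sum.distrib[symmetric] by (rule sum_mono) (rule assms)
  also have "(\<Sum>k=1..N. d k - d (Suc k)) = d 1 - d (Suc N)"
    using sum_Suc_diff[of 1 N "\<lambda>k. - d k"] by simp
  finally show ?thesis .
qed

lemma saps_gap_bound:
  fixes \<theta> :: "'a::euclidean_space \<Rightarrow> ereal" and \<omega> :: "'b::euclidean_space \<Rightarrow> ereal"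
    and f :: "'a \<Rightarrow> 'b \<Rightarrow> real" and X :: "nat \<Rightarrow> 'a" and Y :: "nat \<Rightarrow> 'b"
  assumes \<theta>: "proper_fun \<theta>" "lsc_fun \<theta>" "convex_fun \<theta>"
    and \<omega>: "proper_fun \<omega>" "lsc_fun \<omega>" "convex_fun \<omega>"
    and f_cvx: "\<forall>b\<in>edom \<omega>. convex_on (edom \<theta>) (\<lambda>a. f a b)"
    and f_ccv: "\<forall>a\<in>edom \<theta>. concave_on (edom \<omega>) (\<lambda>b. f a b)"
    and \<gamma>: "\<And>k. \<gamma> k > 0" and N: "N > 0"
    and iter: "\<And>k. k \<in> {1..N} \<Longrightarrow> X (Suc k) = prox \<theta> (\<gamma> k) (X k - \<gamma> k *\<^sub>R Gx k)
                                  \<and> Y (Suc k) = prox \<omega> (\<gamma> k) (Y k + \<gamma> k *\<^sub>R Gy k)"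
    and v: "\<And>k. k \<in> {1..N} \<Longrightarrow> vx k \<in> subdiff \<theta> (X k) \<and> vy k \<in> subdiff \<omega> (Y k)"
    and g: "\<And>k. k \<in> {1..N} \<Longrightarrow>
              gx k \<in> subdiff (\<lambda>a. if a \<in> edom \<theta> then ereal (f a (Y k)) else \<infinity>) (X k)
            \<and> - gy k \<in> subdiff (\<lambda>b. if b \<in> edom \<omega> then ereal (- f (X k) b) else \<infinity>) (Y k)"
    and z: "x \<in> edom \<theta>" "y \<in> edom \<omega>"
    and S_def: "S = (\<Sum>k=1..N. \<gamma> k)"
    and xt_def: "xt = (\<Sum>j=1..N. (\<gamma> j / S) *\<^sub>R X j)" and yt_def: "yt = (\<Sum>j=1..N. (\<gamma> j / S) *\<^sub>R Y j)"
  shows "\<theta> xt + ereal (f xt y) - \<omega> y - (\<theta> x + ereal (f x yt) - \<omega> yt)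
    \<le> ereal ((1 / (2 * S)) *
         (norm ((x, y) - (X 1, Y 1))^2 - norm ((X (N + 1), Y (N + 1)) - (x, y))^2
          + (\<Sum>k=1..N. \<gamma> k ^ 2 * norm ((vx k, vy k) + (Gx k, - Gy k))^2
                      + 2 * \<gamma> k * inner ((Gx k, - Gy k) - (gx k, - gy k)) ((x, y) - (X k, Y k)))))"
proof -
  \<comment> \<open>the gap at (a, b) is \<Phi> a + \<Psi> b, a convex function of a plus a convex function of b\<close>
  define \<Phi> where "\<Phi> a = real_of_ereal (\<theta> a) + f a y - real_of_ereal (\<omega> y)" for a
  define \<Psi> where "\<Psi> b = real_of_ereal (\<omega> b) - f x b - real_of_ereal (\<theta> x)" for b
  define D where "D k = norm ((X k, Y k) - (x, y))^2" for k
  define R where "R k = \<gamma> k ^ 2 * norm ((vx k, vy k) + (Gx k, - Gy k))^2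
                      + 2 * \<gamma> k * inner ((Gx k, - Gy k) - (gx k, - gy k)) ((x, y) - (X k, Y k))" for k
  have XY: "X k \<in> edom \<theta>" "Y k \<in> edom \<omega>" if "k \<in> {1..N}" for k
    using v[OF that] subdiff_imp_edom by blast+
  have "2 * \<gamma> k * (\<Phi> (X k) + \<Psi> (Y k)) \<le> D k - D (Suc k) + R k" if k: "k \<in> {1..N}" for k
    using saps_step_gap[OF \<theta> \<omega> \<gamma> v[OF k, THEN conjunct1] v[OF k, THEN conjunct2]
        g[OF k, THEN conjunct1] g[OF k, THEN conjunct2] z, where Gx = "Gx k" and Gy = "Gy k"]
      iter[OF k]
    by (simp add: \<Phi>_def \<Psi>_def D_def R_def algebra_simps)
  then have sum_le: "(\<Sum>k=1..N. 2 * \<gamma> k * (\<Phi> (X k) + \<Psi> (Y k))) \<le> D 1 - D (Suc N) + (\<Sum>k=1..N. R k)"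
    by (rule sum_le_telescope)
  have "convex_on (edom \<theta>) \<Phi>"
    unfolding \<Phi>_def using convex_on_real_of_ereal[OF \<theta>(1,3)] f_cvx z(2) convex_edom[OF \<theta>(3)]
    by (intro convex_on_diff convex_on_add) (auto simp: concave_on_const)
  moreover have "convex_on (edom \<omega>) \<Psi>"
    unfolding \<Psi>_def using convex_on_real_of_ereal[OF \<omega>(1,3)] f_ccv z(1) convex_edom[OF \<omega>(3)]
    by (intro convex_on_diff) (auto simp: concave_on_const)
  ultimately have "\<Phi> xt + \<Psi> yt \<le> (\<Sum>k=1..N. \<gamma> k * (\<Phi> (X k) + \<Psi> (Y k))) / S"
    unfolding xt_def yt_def S_def using N \<gamma> XY by (intro convex_on_pair_weighted_mean_le) auto
  also have "\<dots> \<le> (D 1 - D (Suc N) + (\<Sum>k=1..N. R k)) / (2 * S)"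
  proof -
    have "S > 0"
      unfolding S_def using N \<gamma> by (intro sum_pos) auto
    moreover have "(\<Sum>k=1..N. 2 * \<gamma> k * (\<Phi> (X k) + \<Psi> (Y k))) = 2 * (\<Sum>k=1..N. \<gamma> k * (\<Phi> (X k) + \<Psi> (Y k)))"
      by (simp add: sum_distrib_left mult.assoc)
    ultimately show ?thesis
      using sum_le by (simp add: field_simps)
  qed
  finally have gap_le: "\<Phi> xt + \<Psi> yt \<le> (D 1 - D (Suc N) + (\<Sum>k=1..N. R k)) / (2 * S)" .
  have "xt \<in> edom \<theta>" "yt \<in> edom \<omega>"
    unfolding xt_def yt_def S_def using N \<gamma> XY convex_edom[OF \<theta>(3)] convex_edom[OF \<omega>(3)]
    by (auto intro!: weighted_mean_in_convex)
  then have "\<theta> xt + ereal (f xt y) - \<omega> y - (\<theta> x + ereal (f x yt) - \<omega> yt) = ereal (\<Phi> xt + \<Psi> yt)"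
    using z \<theta>(1) \<omega>(1)
    by (cases "\<theta> xt"; cases "\<theta> x"; cases "\<omega> y"; cases "\<omega> yt")
       (auto simp: edom_def proper_fun_def \<Phi>_def \<Psi>_def)
  also have "\<dots> \<le> ereal ((D 1 - D (Suc N) + (\<Sum>k=1..N. R k)) / (2 * S))"
    using gap_le by simp
  finally show ?thesis
    unfolding norm_minus_commute[of "(x, y)" "(X 1, Y 1)"] by (simp add: D_def R_def)
qed

theorem proposition2p1:
  fixes \<theta> :: "'a::euclidean_space \<Rightarrow> ereal"
    and \<omega> :: "'b::euclidean_space \<Rightarrow> ereal"
    and P :: "'c measure"  \<comment> \<open>distribution of the random vector xi\<close>
    and \<Xi> :: "'c set"
    and M :: "'w measure"  \<comment> \<open>underlying probability space of the samples\<close>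
    and \<xi> :: "nat \<Rightarrow> 'w \<Rightarrow> 'c"  \<comment> \<open>samples xi_1, xi_2, ...\<close>
    and F :: "'a \<Rightarrow> 'b \<Rightarrow> 'c \<Rightarrow> real"
    and f :: "'a \<Rightarrow> 'b \<Rightarrow> real"
    and Gx :: "'a \<Rightarrow> 'b \<Rightarrow> 'c \<Rightarrow> 'a" and Gy :: "'a \<Rightarrow> 'b \<Rightarrow> 'c \<Rightarrow> 'b"
    and gx :: "'a \<Rightarrow> 'b \<Rightarrow> 'a" and gy :: "'a \<Rightarrow> 'b \<Rightarrow> 'b"
    and \<gamma> :: "nat \<Rightarrow> real"
    and x1 :: 'a and y1 :: 'b
    and xs :: "'w \<Rightarrow> nat \<Rightarrow> 'a" and ys :: "'w \<Rightarrow> nat \<Rightarrow> 'b"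
    and N :: nat and s :: 'w
    and vx :: "nat \<Rightarrow> 'a" and vy :: "nat \<Rightarrow> 'b"
    and x :: 'a and y :: 'b
  assumes \<theta>: "proper_fun \<theta>" "lsc_fun \<theta>" "convex_fun \<theta>"
    and \<omega>: "proper_fun \<omega>" "lsc_fun \<omega>" "convex_fun \<omega>"
    and P: "prob_space P" and supp: "AE t in P. t \<in> \<Xi>"
    and f_def: "\<forall>a\<in>edom \<theta>. \<forall>b\<in>edom \<omega>. integrable P (F a b) \<and> f a b = (\<integral>t. F a b t \<partial>P)"
    and f_cont: "continuous_on (edom \<theta> \<times> edom \<omega>) (\<lambda>(a, b). f a b)"
    and f_cvx: "\<forall>b\<in>edom \<omega>. convex_on (edom \<theta>) (\<lambda>a. f a b)"
    and f_ccv: "\<forall>a\<in>edom \<theta>. concave_on (edom \<omega>) (\<lambda>b. f a b)"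
    \<comment> \<open>(A1): i.i.d. samples with the distribution of xi\<close>
    and A1: "prob_space M" "\<forall>k. \<xi> k \<in> measurable M P" "\<forall>k. distr M P (\<xi> k) = P"
            "prob_space.indep_vars M (\<lambda>_. P) \<xi> UNIV"
    \<comment> \<open>(A2): stochastic oracle\<close>
    and A2x: "\<forall>a\<in>edom \<theta>. \<forall>b\<in>edom \<omega>. integrable P (Gx a b) \<and> gx a b = (\<integral>t. Gx a b t \<partial>P)
              \<and> gx a b \<in> subdiff (\<lambda>a'. if a' \<in> edom \<theta> then ereal (f a' b) else \<infinity>) a"
    and A2y: "\<forall>a\<in>edom \<theta>. \<forall>b\<in>edom \<omega>. integrable P (Gy a b) \<and> gy a b = (\<integral>t. Gy a b t \<partial>P)
              \<and> - gy a b \<in> subdiff (\<lambda>b'. if b' \<in> edom \<omega> then ereal (- f a b') else \<infinity>) b"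
    \<comment> \<open>SAPS\<close>
    and step: "\<forall>k. \<gamma> k > 0"
    and init: "\<forall>w. xs w 1 = x1 \<and> ys w 1 = y1"
    and iter: "\<forall>w. \<forall>k\<ge>1.
        xs w (Suc k) = prox \<theta> (\<gamma> k) (xs w k - \<gamma> k *\<^sub>R Gx (xs w k) (ys w k) (\<xi> k w)) \<and>
        ys w (Suc k) = prox \<omega> (\<gamma> k) (ys w k + \<gamma> k *\<^sub>R Gy (xs w k) (ys w k) (\<xi> k w))"
    and N: "N > 0" and s: "s \<in> space M"
    and v: "\<forall>k\<in>{1..N}. vx k \<in> subdiff \<theta> (xs s k) \<and> vy k \<in> subdiff \<omega> (ys s k)"
    and z: "x \<in> edom \<theta>" "y \<in> edom \<omega>"
  shows
    "let \<phi> = (\<lambda>a b. \<theta> a + ereal (f a b) - \<omega> b);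
         S = (\<Sum>k=1..N. \<gamma> k);
         xt = (\<Sum>j=1..N. (\<gamma> j / S) *\<^sub>R xs s j);
         yt = (\<Sum>j=1..N. (\<gamma> j / S) *\<^sub>R ys s j);
         zk = (\<lambda>k. (xs s k, ys s k));
         G = (\<lambda>k. (Gx (xs s k) (ys s k) (\<xi> k s), - Gy (xs s k) (ys s k) (\<xi> k s)));
         g = (\<lambda>k. (gx (xs s k) (ys s k), - gy (xs s k) (ys s k)));
         \<Delta> = (\<lambda>k. G k - g k);
         vv = (\<lambda>k. (vx k, vy k))
     in \<phi> xt y - \<phi> x yt
        \<le> ereal ((1 / (2 * S)) *
             (norm ((x, y) - zk 1)^2 - norm (zk (N + 1) - (x, y))^2
              + (\<Sum>k=1..N. \<gamma> k ^ 2 * norm (vv k + G k)^2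
                           + 2 * \<gamma> k * inner (\<Delta> k) ((x, y) - zk k))))"
proof -
  have edom: "xs s k \<in> edom \<theta>" "ys s k \<in> edom \<omega>" if "k \<in> {1..N}" for k
    using v that subdiff_imp_edom by blast+
  show ?thesis
    unfolding Let_def
    by (rule saps_gap_bound[where X = "xs s" and Y = "ys s"
          and Gx = "\<lambda>k. Gx (xs s k) (ys s k) (\<xi> k s)" and Gy = "\<lambda>k. Gy (xs s k) (ys s k) (\<xi> k s)"
          and gx = "\<lambda>k. gx (xs s k) (ys s k)" and gy = "\<lambda>k. gy (xs s k) (ys s k)",
          OF \<theta> \<omega> f_cvx f_ccv _ N _ _ _ z refl refl refl])
       (use step iter v edom in \<open>auto intro: A2x[rule_format, THEN conjunct2, THEN conjunct2]
                                           A2y[rule_format, THEN conjunct2, THEN conjunct2]\<close>)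
qed

end
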